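(* Let $(X,d)$ be a pointed metric space, let $((x_i,y_i))_{i\in I}$ be a Lipschitz interpolating family in $\widetilde X$ for $\mathrm{Lip}_0(X)$ with Lipschitz interpolation constant $M$, and let $(f_i)_{i\in I}$ be a Beurling set of functions in $\mathrm{Lip}_0(X)$ for $((x_i,y_i))_{i\in I}$. Then the bounded linear operator $R:\ell_\infty(I)\to\mathrm{Lip}_0(X)$, $R(\alpha)=\sum_{i\in I}\alpha_i f_i$ for $\alpha=(\alpha_i)_{i\in I}\in\ell_\infty(I)$, is weak*-to-weak* continuous, where $\ell_\infty(I)=\ell_1(I)^*$ and $\mathrm{Lip}_0(X)=\mathcal F(X)^*$.
   Context: All spaces are real. $(X,d)$ is a metric space with base point $0$, $\widetilde{X}=\{(x,y)\in X\times X: x\neq y\}$. $\mathrm{Lip}_0(X)$ is the Banach space of Lipschitz $f:X\to\mathbb{R}$ with $f(0)=0$, normed by $\|f\|=\sup_{(x,y)\in\widetilde X}|f(x)-f(y)|/d(x,y)$. For $x\in X$, $\delta_x\in\mathrm{Lip}_0(X)^*$ is $\delta_x(f)=f(x)$; the Lipschitz-free space $\mathcal F(X)$ is the closed linear span of $\{\delta_x\}$ in $\mathrm{Lip}_0(X)^*$, and $\mathrm{Lip}_0(X)$ is identified isometrically with $\mathcal F(X)^*$ via $f\mapsto(\gamma\mapsto\gamma(f))$; the weak* topology on $\mathrm{Lip}_0(X)$ is the one induced by this duality. For a family $((x_i,y_i))_{i\in I}$ in $\widetilde X$, its Lipschitz interpolating operator is $T:\mathrm{Lip}_0(X)\to\ell_\infty(I)$,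 $T(f)=\big((f(x_i)-f(y_i))/d(x_i,y_i)\big)_{i\in I}$; the family is Lipschitz interpolating for $\mathrm{Lip}_0(X)$ if $T$ is surjective, and then its Lipschitz interpolation constant is $M=\inf\{K\geq 1: \forall \alpha\in\ell_\infty(I), \|\alpha\|_\infty\le1,\ \exists f\in\mathrm{Lip}_0(X),\ \|f\|\le K,\ T(f)=\alpha\}$. A Beurling set of functions in $\mathrm{Lip}_0(X)$ for such a family is a family $(f_i)_{i\in I}$ of functions $f_i:X\to\mathbb R$ with $f_i(0)=0$, $(f_i(x_j)-f_i(y_j))/d(x_j,y_j)=\delta_{ij}$ for all $i,j\in I$, and $\sup_{(x,y)\in\widetilde X}\sum_{i\in I}|f_i(x)-f_i(y)|/d(x,y)\leq M$. (For such a set, $R$ above is a well-defined bounded linear operator into $\mathrm{Lip}_0(X)$.) *)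

theory Defs
  imports "HOL-Analysis.Analysis"
begin

text \<open>The pointed metric space is a type of class metric_space with base point z.
  Lip_0(X) is represented as a set of real-valued functions on the type.\<close>

definition Lip0 :: "'a::metric_space \<Rightarrow> ('a \<Rightarrow> real) set" where
  "Lip0 z = {f. f z = 0 \<and> (\<exists>L. \<forall>x y. \<bar>f x - f y\<bar> \<le> L * dist x y)}"

text \<open>Lipschitz norm (the sup over pairs x ~= y; 0 is added so that it is well-defined
  for a one-point space, which does not change the value since the quotients are >= 0).\<close>
definition lipnorm :: "('a::metric_space \<Rightarrow> real) \<Rightarrow> real" where
  "lipnorm f = Sup ({\<bar>f x - f y\<bar> / dist x y | x y. x \<noteq> y} \<union> {0})"

text \<open>The Lipschitz-free space: the norm closure in Lip_0(X)^* of the span of the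
  evaluation functionals delta_x. A functional phi (only its values on Lip0 matter)
  belongs to it iff it is a norm limit of finite linear combinations of deltas.\<close>
definition free_space :: "'a::metric_space \<Rightarrow> (('a \<Rightarrow> real) \<Rightarrow> real) set" where
  "free_space z = {\<phi>. \<forall>e>0. \<exists>S c. finite S \<and>
      (\<forall>f\<in>Lip0 z. \<bar>\<phi> f - (\<Sum>x\<in>S. c x * f x)\<bar> \<le> e * lipnorm f)}"

definition weakstar_Lip0 :: "'a::metric_space \<Rightarrow> ('a \<Rightarrow> real) topology" where
  "weakstar_Lip0 z = topology_generated_by
     {{f \<in> Lip0 z. \<phi> f \<in> U} | \<phi> U. \<phi> \<in> free_space z \<and> open U}"

definition linf :: "'i set \<Rightarrow> ('i \<Rightarrow> real) set" where
  "linf I = {\<alpha>. (\<exists>B. \<forall>i\<in>I. \<bar>\<alpha> i\<bar> \<le> B) \<and> (\<forall>i. i \<notin> I \<longrightarrow> \<alpha> i = 0)}"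

definition l1 :: "'i set \<Rightarrow> ('i \<Rightarrow> real) set" where
  "l1 I = {\<beta>. (\<lambda>i. \<bar>\<beta> i\<bar>) summable_on I \<and> (\<forall>i. i \<notin> I \<longrightarrow> \<beta> i = 0)}"

definition weakstar_linf :: "'i set \<Rightarrow> ('i \<Rightarrow> real) topology" where
  "weakstar_linf I = topology_generated_by
     {{\<alpha> \<in> linf I. (\<Sum>\<^sub>\<infinity>i\<in>I. \<alpha> i * \<beta> i) \<in> U} | \<beta> U. \<beta> \<in> l1 I \<and> open U}"

definition lip_interpolating ::
    "'a::metric_space \<Rightarrow> 'i set \<Rightarrow> ('i \<Rightarrow> 'a) \<Rightarrow> ('i \<Rightarrow> 'a) \<Rightarrow> bool" where
  "lip_interpolating z I xs ys \<longleftrightarrow> (\<forall>i\<in>I. xs i \<noteq> ys i) \<and>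
     (\<forall>\<alpha>\<in>linf I. \<exists>f\<in>Lip0 z. \<forall>i\<in>I. (f (xs i) - f (ys i)) / dist (xs i) (ys i) = \<alpha> i)"

definition lip_interp_const ::
    "'a::metric_space \<Rightarrow> 'i set \<Rightarrow> ('i \<Rightarrow> 'a) \<Rightarrow> ('i \<Rightarrow> 'a) \<Rightarrow> real" where
  "lip_interp_const z I xs ys = Inf {K. K \<ge> 1 \<and>
     (\<forall>\<alpha>\<in>linf I. (\<forall>i\<in>I. \<bar>\<alpha> i\<bar> \<le> 1) \<longrightarrow>
        (\<exists>f\<in>Lip0 z. lipnorm f \<le> K \<and>
           (\<forall>i\<in>I. (f (xs i) - f (ys i)) / dist (xs i) (ys i) = \<alpha> i)))}"

definition beurling_set ::
    "'a::metric_space \<Rightarrow> 'i set \<Rightarrow> ('i \<Rightarrow> 'a) \<Rightarrow> ('i \<Rightarrow> 'a) \<Rightarrow> real \<Rightarrow> ('i \<Rightarrow> 'a \<Rightarrow> real) \<Rightarrow> bool" where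
  "beurling_set z I xs ys M fs \<longleftrightarrow>
     (\<forall>i\<in>I. fs i z = 0) \<and>
     (\<forall>i\<in>I. \<forall>j\<in>I. (fs i (xs j) - fs i (ys j)) / dist (xs j) (ys j) = (if i = j then 1 else 0)) \<and>
     (\<forall>x y. x \<noteq> y \<longrightarrow> (\<lambda>i. \<bar>fs i x - fs i y\<bar>) summable_on I \<and>
        (\<Sum>\<^sub>\<infinity>i\<in>I. \<bar>fs i x - fs i y\<bar>) / dist x y \<le> M)"

definition beurling_op :: "'i set \<Rightarrow> ('i \<Rightarrow> 'a \<Rightarrow> real) \<Rightarrow> ('i \<Rightarrow> real) \<Rightarrow> 'a \<Rightarrow> real" where
  "beurling_op I fs \<alpha> = (\<lambda>x. \<Sum>\<^sub>\<infinity>i\<in>I. \<alpha> i * fs i x)"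

end

theory Submission
  imports Defs
begin

text \<open>The operator R is the adjoint of gamma |-> (gamma(f_i))_i, a map from F(X) to l1(I), so
  weak*-to-weak* continuity amounts to gamma(R alpha) = sum_i alpha_i gamma(f_i) for every gamma in
  F(X). Testing a functional theta against sum_{i in F} sgn(theta(f_i)) f_i, whose Lipschitz norm
  is at most M by the Beurling bound, gives sum_{i in F} |theta(f_i)| <= ||theta|| M; in particular
  (gamma(f_i))_i lies in l1(I). For a finite combination mu of point evaluations the identity
  holds by exchanging a finite sum with the sum over I. A general gamma is e-close in norm to such
  a mu, and the l1 estimate for theta = gamma - mu shows that the two sides of the identity differ
  by O(e).\<close>

lemma eq_0_if_abs_le_mult_eps:
  fixes d K :: real
  assumes "\<And>e. 0 < e \<Longrightarrow> \<bar>d\<bar> \<le> e * K" "0 \<le> K"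
  shows "d = 0"
proof (rule dense_eq0_I)
  fix e :: real assume "0 < e"
  moreover have "0 < K + 1" using assms(2) by simp
  ultimately have "\<bar>d\<bar> \<le> e / (K + 1) * K" by (intro assms(1) divide_pos_pos)
  also have "\<dots> \<le> e" using \<open>0 < e\<close> \<open>0 \<le> K\<close> by (simp add: field_simps)
  finally show "\<bar>d\<bar> \<le> e" .
qed

lemma has_sum_diff:
  fixes f g :: "'i \<Rightarrow> 'b::topological_ab_group_add"
  assumes "(f has_sum a) A" "(g has_sum b) A"
  shows "((\<lambda>i. f i - g i) has_sum (a - b)) A"
proof -
  have "((\<lambda>i. - g i) has_sum - b) A" using has_sum_uminus[of g A "- b"] assms(2) by simp
  from has_sum_add[OF assms(1) this] show ?thesis by simp
qed

lemma infsum_diff: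
  fixes f g :: "'i \<Rightarrow> 'b::{topological_ab_group_add, t2_space}"
  assumes "f summable_on A" "g summable_on A"
  shows "(\<Sum>\<^sub>\<infinity>i\<in>A. f i - g i) = (\<Sum>\<^sub>\<infinity>i\<in>A. f i) - (\<Sum>\<^sub>\<infinity>i\<in>A. g i)"
  using has_sum_diff[OF assms[unfolded summable_iff_has_sum_infsum]] by (simp add: infsumI)

lemma has_sum_sum:
  fixes f :: "'s \<Rightarrow> 'i \<Rightarrow> 'b::topological_comm_monoid_add"
  assumes "finite S" "\<And>s. s \<in> S \<Longrightarrow> (f s has_sum a s) A"
  shows "((\<lambda>i. \<Sum>s\<in>S. f s i) has_sum (\<Sum>s\<in>S. a s)) A"
  using assms by (induction S rule: finite_induct) (auto intro: has_sum_add)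

lemma infsum_sum:
  fixes f :: "'s \<Rightarrow> 'i \<Rightarrow> 'b::{topological_comm_monoid_add, t2_space}"
  assumes "finite S" "\<And>s. s \<in> S \<Longrightarrow> f s summable_on A"
  shows "(\<Sum>\<^sub>\<infinity>i\<in>A. \<Sum>s\<in>S. f s i) = (\<Sum>s\<in>S. \<Sum>\<^sub>\<infinity>i\<in>A. f s i)"
proof -
  have "((\<lambda>i. \<Sum>s\<in>S. f s i) has_sum (\<Sum>s\<in>S. \<Sum>\<^sub>\<infinity>i\<in>A. f s i)) A"
    using assms by (intro has_sum_sum) auto
  then show ?thesis by (rule infsumI)
qed

lemma summable_on_bounded_mult:
  fixes g \<alpha> :: "'i \<Rightarrow> real"
  assumes "g summable_on A" "\<And>i. i \<in> A \<Longrightarrow> \<bar>\<alpha> i\<bar> \<le> B"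
  shows "(\<lambda>i. \<alpha> i * g i) summable_on A"
proof -
  have "(\<lambda>i. norm (B * g i)) summable_on A"
    using summable_on_cmult_right[OF assms(1)]
    by (rule summable_on_iff_abs_summable_on_real[THEN iffD1])
  then have "(\<lambda>i. norm (\<alpha> i * g i)) summable_on A"
  proof (rule Infinite_Sum.abs_summable_on_comparison_test)
    fix i assume "i \<in> A"
    then have "\<bar>\<alpha> i\<bar> \<le> \<bar>B\<bar>" using assms(2) by force
    then show "norm (\<alpha> i * g i) \<le> norm (B * g i)" by (simp add: abs_mult mult_right_mono)
  qed
  then show ?thesis by (rule summable_on_iff_abs_summable_on_real[THEN iffD2])
qed

lemma abs_infsum_bounded_mult_le:
  fixes g \<alpha> :: "'i \<Rightarrow> real"
  assumes "g summable_on A" "\<And>i. i \<in> A \<Longrightarrow> \<bar>\<alpha> i\<bar> \<le> B"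
  shows "\<bar>\<Sum>\<^sub>\<infinity>i\<in>A. \<alpha> i * g i\<bar> \<le> B * (\<Sum>\<^sub>\<infinity>i\<in>A. \<bar>g i\<bar>)"
proof -
  have abs_g: "(\<lambda>i. \<bar>g i\<bar>) summable_on A"
    using summable_on_iff_abs_summable_on_real[THEN iffD1, OF assms(1)] by simp
  have abs_\<alpha>g: "(\<lambda>i. norm (\<alpha> i * g i)) summable_on A"
    by (rule summable_on_iff_abs_summable_on_real[THEN iffD1, OF summable_on_bounded_mult[OF assms]])
  then have "\<bar>\<Sum>\<^sub>\<infinity>i\<in>A. \<alpha> i * g i\<bar> \<le> (\<Sum>\<^sub>\<infinity>i\<in>A. norm (\<alpha> i * g i))"
    using norm_infsum_bound[of "\<lambda>i. \<alpha> i * g i" A] by simp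
  also have "\<dots> \<le> (\<Sum>\<^sub>\<infinity>i\<in>A. B * \<bar>g i\<bar>)"
    using abs_\<alpha>g summable_on_cmult_right[OF abs_g] assms(2)
    by (intro infsum_mono) (auto simp: abs_mult intro: mult_right_mono)
  also have "\<dots> = B * (\<Sum>\<^sub>\<infinity>i\<in>A. \<bar>g i\<bar>)"
    by (rule infsum_cmult_right[OF abs_g])
  finally show ?thesis .
qed

lemma Lip0_base: "f \<in> Lip0 z \<Longrightarrow> f z = 0"
  by (simp add: Lip0_def)

lemma bdd_above_Lip0_quotients:
  assumes "f \<in> Lip0 z"
  shows "bdd_above ({\<bar>f x - f y\<bar> / dist x y | x y. x \<noteq> y} \<union> {0})"
proof -
  obtain L where L: "\<And>x y. \<bar>f x - f y\<bar> \<le> L * dist x y"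
    using assms unfolding Lip0_def by auto
  have "\<bar>f x - f y\<bar> / dist x y \<le> max L 0" if "x \<noteq> y" for x y
  proof -
    have "\<bar>f x - f y\<bar> \<le> max L 0 * dist x y"
      using L[of x y] mult_right_mono[of L "max L 0" "dist x y"] by simp
    with that show ?thesis by (simp add: divide_le_eq)
  qed
  then show ?thesis by (auto intro!: bdd_aboveI[of _ "max L 0"])
qed

lemma lipnorm_nonneg: "f \<in> Lip0 z \<Longrightarrow> 0 \<le> lipnorm f"
  unfolding lipnorm_def by (rule cSup_upper[OF _ bdd_above_Lip0_quotients]) auto

lemma Lip0_abs_diff_le:
  assumes "f \<in> Lip0 z"
  shows "\<bar>f x - f y\<bar> \<le> lipnorm f * dist x y"
proof (cases "x = y")
  case False
  have "\<bar>f x - f y\<bar> / dist x y \<le> lipnorm f"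
    unfolding lipnorm_def using False by (intro cSup_upper bdd_above_Lip0_quotients[OF assms]) auto
  with False show ?thesis by (simp add: divide_le_eq mult.commute)
qed simp

lemma Lip0_abs_le: "f \<in> Lip0 z \<Longrightarrow> \<bar>f x\<bar> \<le> lipnorm f * dist x z"
  using Lip0_abs_diff_le[of f z x z] by (simp add: Lip0_base)

lemma lipnorm_le:
  assumes "\<And>x y. \<bar>f x - f y\<bar> \<le> L * dist x y" "0 \<le> L"
  shows "lipnorm f \<le> L"
  unfolding lipnorm_def
proof (rule cSup_least)
  fix t assume "t \<in> {\<bar>f x - f y\<bar> / dist x y | x y. x \<noteq> y} \<union> {0}"
  then consider "t = 0" | x y where "x \<noteq> y" "t = \<bar>f x - f y\<bar> / dist x y" by blast
  then show "t \<le> L"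
    by cases (use assms in \<open>auto simp: divide_le_eq\<close>)
qed auto

lemma abs_sum_mult_le:
  fixes a h b :: "'i \<Rightarrow> real"
  assumes "\<And>i. i \<in> F \<Longrightarrow> \<bar>h i\<bar> \<le> b i"
  shows "\<bar>\<Sum>i\<in>F. a i * h i\<bar> \<le> (\<Sum>i\<in>F. \<bar>a i\<bar> * b i)"
proof -
  have "\<bar>\<Sum>i\<in>F. a i * h i\<bar> \<le> (\<Sum>i\<in>F. \<bar>a i * h i\<bar>)" by (rule sum_abs)
  also have "\<dots> \<le> (\<Sum>i\<in>F. \<bar>a i\<bar> * b i)"
    using assms by (intro sum_mono) (simp add: abs_mult mult_left_mono)
  finally show ?thesis .
qed

lemma Lip0_sum:
  assumes "\<And>i. i \<in> F \<Longrightarrow> g i \<in> Lip0 z"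
  shows "(\<lambda>x. \<Sum>i\<in>F. a i * g i x) \<in> Lip0 z"
    and "lipnorm (\<lambda>x. \<Sum>i\<in>F. a i * g i x) \<le> (\<Sum>i\<in>F. \<bar>a i\<bar> * lipnorm (g i))"
proof -
  have bound: "\<bar>(\<Sum>i\<in>F. a i * g i x) - (\<Sum>i\<in>F. a i * g i y)\<bar>
      \<le> (\<Sum>i\<in>F. \<bar>a i\<bar> * lipnorm (g i)) * dist x y" for x y
  proof -
    have "\<bar>(\<Sum>i\<in>F. a i * g i x) - (\<Sum>i\<in>F. a i * g i y)\<bar> = \<bar>\<Sum>i\<in>F. a i * (g i x - g i y)\<bar>"
      by (simp add: sum_subtractf right_diff_distrib)
    also have "\<dots> \<le> (\<Sum>i\<in>F. \<bar>a i\<bar> * (lipnorm (g i) * dist x y))"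
      by (rule abs_sum_mult_le[OF Lip0_abs_diff_le[OF assms]])
    also have "\<dots> = (\<Sum>i\<in>F. \<bar>a i\<bar> * lipnorm (g i)) * dist x y"
      by (simp add: sum_distrib_left mult_ac)
    finally show ?thesis .
  qed
  have "(\<Sum>i\<in>F. a i * g i z) = 0" using assms by (simp add: Lip0_base)
  with bound show "(\<lambda>x. \<Sum>i\<in>F. a i * g i x) \<in> Lip0 z"
    unfolding Lip0_def by blast
  show "lipnorm (\<lambda>x. \<Sum>i\<in>F. a i * g i x) \<le> (\<Sum>i\<in>F. \<bar>a i\<bar> * lipnorm (g i))"
    using bound assms
    by (intro lipnorm_le sum_nonneg mult_nonneg_nonneg abs_ge_zero lipnorm_nonneg) auto
qed

lemma free_spaceE:
  assumes "\<phi> \<in> free_space z" "0 < e"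
  obtains S c where "finite S"
    "\<And>f. f \<in> Lip0 z \<Longrightarrow> \<bar>\<phi> f - (\<Sum>x\<in>S. c x * f x)\<bar> \<le> e * lipnorm f"
  using assms unfolding free_space_def by blast

lemma zero_in_free_space: "(\<lambda>_. 0) \<in> free_space z"
  unfolding free_space_def
  by (auto intro!: exI[of _ "{}"] mult_nonneg_nonneg lipnorm_nonneg)

lemma free_space_bounded:
  assumes "\<phi> \<in> free_space z"
  obtains C where "0 \<le> C" "\<And>f. f \<in> Lip0 z \<Longrightarrow> \<bar>\<phi> f\<bar> \<le> C * lipnorm f"
proof -
  obtain S c where S: "finite S"
    "\<And>f. f \<in> Lip0 z \<Longrightarrow> \<bar>\<phi> f - (\<Sum>x\<in>S. c x * f x)\<bar> \<le> 1 * lipnorm f"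
    using free_spaceE[OF assms zero_less_one] by blast
  define C where "C = 1 + (\<Sum>x\<in>S. \<bar>c x\<bar> * dist x z)"
  have "\<bar>\<phi> f\<bar> \<le> C * lipnorm f" if f: "f \<in> Lip0 z" for f
  proof -
    have "\<bar>\<Sum>x\<in>S. c x * f x\<bar> \<le> (\<Sum>x\<in>S. \<bar>c x\<bar> * (lipnorm f * dist x z))"
      by (rule abs_sum_mult_le[OF Lip0_abs_le[OF f]])
    then show ?thesis
      using S(2)[OF f] by (simp add: C_def algebra_simps sum_distrib_left)
  qed
  moreover have "0 \<le> C" by (simp add: C_def sum_nonneg)
  ultimately show ?thesis using that by blast
qed

lemma free_space_sum:
  assumes \<phi>: "\<phi> \<in> free_space z" and "finite F" "\<And>i. i \<in> F \<Longrightarrow> g i \<in> Lip0 z"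
  shows "\<phi> (\<lambda>x. \<Sum>i\<in>F. a i * g i x) = (\<Sum>i\<in>F. a i * \<phi> (g i))"
proof -
  define G where "G = (\<lambda>x. \<Sum>i\<in>F. a i * g i x)"
  have G: "G \<in> Lip0 z" unfolding G_def using assms(3) by (rule Lip0_sum)
  define K where "K = lipnorm G + (\<Sum>i\<in>F. \<bar>a i\<bar> * lipnorm (g i))"
  have "0 \<le> K" unfolding K_def using G assms(3)
    by (auto intro!: add_nonneg_nonneg sum_nonneg mult_nonneg_nonneg lipnorm_nonneg)
  moreover have "\<bar>\<phi> G - (\<Sum>i\<in>F. a i * \<phi> (g i))\<bar> \<le> e * K" if "0 < e" for e
  proof -
    obtain S c where S: "finite S"
      "\<And>f. f \<in> Lip0 z \<Longrightarrow> \<bar>\<phi> f - (\<Sum>x\<in>S. c x * f x)\<bar> \<le> e * lipnorm f"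
      using free_spaceE[OF \<phi> \<open>0 < e\<close>] by blast
    have "(\<Sum>x\<in>S. c x * G x) = (\<Sum>i\<in>F. a i * (\<Sum>x\<in>S. c x * g i x))"
      unfolding G_def by (simp add: sum_distrib_left sum.swap[of _ S] mult_ac)
    then have "\<phi> G - (\<Sum>i\<in>F. a i * \<phi> (g i)) =
        (\<phi> G - (\<Sum>x\<in>S. c x * G x)) - (\<Sum>i\<in>F. a i * (\<phi> (g i) - (\<Sum>x\<in>S. c x * g i x)))"
      by (simp add: right_diff_distrib sum_subtractf)
    also have "\<bar>\<dots>\<bar> \<le> e * lipnorm G + (\<Sum>i\<in>F. \<bar>a i\<bar> * (e * lipnorm (g i)))"
      by (rule order_trans[OF abs_triangle_ineq4 add_mono[OF S(2)[OF G] abs_sum_mult_le]])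
        (rule S(2)[OF assms(3)])
    also have "\<dots> = e * K"
      by (simp add: K_def algebra_simps sum_distrib_left)
    finally show ?thesis .
  qed
  ultimately have "\<phi> G - (\<Sum>i\<in>F. a i * \<phi> (g i)) = 0"
    by (rule eq_0_if_abs_le_mult_eps[rotated])
  then show ?thesis unfolding G_def by simp
qed

lemma topspace_weakstar_Lip0: "topspace (weakstar_Lip0 z) = Lip0 z"
proof -
  have "{f \<in> Lip0 z. (\<lambda>_. 0) f \<in> (UNIV :: real set)} \<in>
      {{f \<in> Lip0 z. \<phi> f \<in> U} | \<phi> U. \<phi> \<in> free_space z \<and> open U}"
    using zero_in_free_space by blast
  then show ?thesis unfolding weakstar_Lip0_def by auto
qed

lemma topspace_weakstar_linf: "topspace (weakstar_linf I) = linf I"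
proof -
  have "(\<lambda>_. 0) \<in> l1 I" by (simp add: l1_def)
  then have "{\<alpha> \<in> linf I. (\<Sum>\<^sub>\<infinity>i\<in>I. \<alpha> i * 0) \<in> (UNIV :: real set)} \<in>
      {{\<alpha> \<in> linf I. (\<Sum>\<^sub>\<infinity>i\<in>I. \<alpha> i * \<beta> i) \<in> U} | \<beta> U. \<beta> \<in> l1 I \<and> open U}"
    by blast
  then show ?thesis unfolding weakstar_linf_def by auto
qed

lemma continuous_map_weakstar_linf_pairing:
  assumes "\<beta> \<in> l1 I"
  shows "continuous_map (weakstar_linf I) euclidean (\<lambda>\<alpha>. \<Sum>\<^sub>\<infinity>i\<in>I. \<alpha> i * \<beta> i)"
  unfolding continuous_map_def topspace_weakstar_linf
proof (intro conjI allI impI)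
  fix U :: "real set" assume "openin euclidean U"
  then have "{\<alpha> \<in> linf I. (\<Sum>\<^sub>\<infinity>i\<in>I. \<alpha> i * \<beta> i) \<in> U} \<in>
      {{\<alpha> \<in> linf I. (\<Sum>\<^sub>\<infinity>i\<in>I. \<alpha> i * \<beta> i) \<in> U} | \<beta> U. \<beta> \<in> l1 I \<and> open U}"
    using assms by auto
  then show "openin (weakstar_linf I) {\<alpha> \<in> linf I. (\<Sum>\<^sub>\<infinity>i\<in>I. \<alpha> i * \<beta> i) \<in> U}"
    unfolding weakstar_linf_def by (rule topology_generated_by_Basis)
qed auto

lemma continuous_map_weakstar_Lip0I:
  assumes "g \<in> topspace X \<rightarrow> Lip0 z"
    and "\<And>\<phi>. \<phi> \<in> free_space z \<Longrightarrow> continuous_map X euclidean (\<lambda>x. \<phi> (g x))"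
  shows "continuous_map X (weakstar_Lip0 z) g"
  unfolding weakstar_Lip0_def
proof (rule continuous_on_generated_topo)
  fix V assume "V \<in> {{f \<in> Lip0 z. \<phi> f \<in> U} | \<phi> U. \<phi> \<in> free_space z \<and> open U}"
  then obtain \<phi> U where V: "V = {f \<in> Lip0 z. \<phi> f \<in> U}" and "\<phi> \<in> free_space z" "open U"
    by blast
  then have "openin X {x \<in> topspace X. \<phi> (g x) \<in> U}"
    using assms(2) by (simp add: continuous_map_def)
  moreover have "g -` V \<inter> topspace X = {x \<in> topspace X. \<phi> (g x) \<in> U}"
    using assms(1) V by auto
  ultimately show "openin X (g -` V \<inter> topspace X)" by simp
next
  show "g ` topspace X \<subseteq> \<Union> {{f \<in> Lip0 z. \<phi> f \<in> U} | \<phi> U. \<phi> \<in> free_space z \<and> open U}"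
    using assms(1) topspace_weakstar_Lip0[of z] unfolding weakstar_Lip0_def by auto
qed

lemma linf_bounded:
  assumes "\<alpha> \<in> linf I"
  obtains B where "\<And>i. i \<in> I \<Longrightarrow> \<bar>\<alpha> i\<bar> \<le> B" "0 \<le> B"
proof -
  obtain B where "\<And>i. i \<in> I \<Longrightarrow> \<bar>\<alpha> i\<bar> \<le> B" using assms by (auto simp: linf_def)
  then show ?thesis using that[of "max B 0"] by (meson max.cobounded1 max.cobounded2 order_trans)
qed

locale beurling_family =
  fixes z :: "'a::metric_space" and I :: "'i set" and fs :: "'i \<Rightarrow> 'a \<Rightarrow> real" and M :: real
  assumes fs_base: "i \<in> I \<Longrightarrow> fs i z = 0"
    and summable_abs_diff: "(\<lambda>i. \<bar>fs i x - fs i y\<bar>) summable_on I"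
    and infsum_abs_diff_le: "(\<Sum>\<^sub>\<infinity>i\<in>I. \<bar>fs i x - fs i y\<bar>) \<le> M * dist x y"
    and M_nonneg: "0 \<le> M"

lemma beurling_set_imp_beurling_family:
  assumes "beurling_set z I xs ys M fs"
  shows "beurling_family z I fs (max M 0)"
proof
  fix x y
  show "(\<lambda>i. \<bar>fs i x - fs i y\<bar>) summable_on I"
    using assms by (cases "x = y") (auto simp: beurling_set_def)
  show "(\<Sum>\<^sub>\<infinity>i\<in>I. \<bar>fs i x - fs i y\<bar>) \<le> max M 0 * dist x y"
  proof (cases "x = y")
    case False
    then have "(\<Sum>\<^sub>\<infinity>i\<in>I. \<bar>fs i x - fs i y\<bar>) \<le> M * dist x y"
      using assms by (simp add: beurling_set_def divide_le_eq)
    also have "\<dots> \<le> max M 0 * dist x y" by (simp add: mult_right_mono)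
    finally show ?thesis .
  qed simp
qed (use assms in \<open>auto simp: beurling_set_def\<close>)

context beurling_family
begin

lemma summable_diff: "(\<lambda>i. fs i x - fs i y) summable_on I"
  using summable_abs_diff
  by (rule summable_on_iff_abs_summable_on_real[THEN iffD2, unfolded real_norm_def])

lemma summable_fs: "(\<lambda>i. fs i x) summable_on I"
  using summable_diff[of x z] by (rule summable_on_cong[THEN iffD1, rotated]) (simp add: fs_base)

lemma beurling_op_diff:
  assumes "\<And>i. i \<in> I \<Longrightarrow> \<bar>\<alpha> i\<bar> \<le> B"
  shows "beurling_op I fs \<alpha> x - beurling_op I fs \<alpha> y = (\<Sum>\<^sub>\<infinity>i\<in>I. \<alpha> i * (fs i x - fs i y))"
  unfolding beurling_op_def
  using infsum_diff[OF summable_on_bounded_mult[OF summable_fs assms]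
      summable_on_bounded_mult[OF summable_fs assms]]
  by (simp add: right_diff_distrib)

lemma beurling_op_Lip0:
  assumes "\<And>i. i \<in> I \<Longrightarrow> \<bar>\<alpha> i\<bar> \<le> B" "0 \<le> B"
  shows "beurling_op I fs \<alpha> \<in> Lip0 z" and "lipnorm (beurling_op I fs \<alpha>) \<le> B * M"
proof -
  have bound: "\<bar>beurling_op I fs \<alpha> x - beurling_op I fs \<alpha> y\<bar> \<le> (B * M) * dist x y" for x y
  proof -
    have "\<bar>beurling_op I fs \<alpha> x - beurling_op I fs \<alpha> y\<bar> = \<bar>\<Sum>\<^sub>\<infinity>i\<in>I. \<alpha> i * (fs i x - fs i y)\<bar>"
      by (simp add: beurling_op_diff[OF assms(1)])
    also have "\<dots> \<le> B * (\<Sum>\<^sub>\<infinity>i\<in>I. \<bar>fs i x - fs i y\<bar>)"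
      by (rule abs_infsum_bounded_mult_le[OF summable_diff assms(1)])
    also have "\<dots> \<le> B * (M * dist x y)"
      by (rule mult_left_mono[OF infsum_abs_diff_le assms(2)])
    finally show ?thesis by (simp add: mult_ac)
  qed
  have "beurling_op I fs \<alpha> z = 0"
    unfolding beurling_op_def by (rule infsum_0) (simp add: fs_base)
  with bound show "beurling_op I fs \<alpha> \<in> Lip0 z"
    unfolding Lip0_def by blast
  show "lipnorm (beurling_op I fs \<alpha>) \<le> B * M"
    using bound assms(2) M_nonneg by (intro lipnorm_le) auto
qed

lemma beurling_op_linf_Lip0:
  assumes "\<alpha> \<in> linf I"
  shows "beurling_op I fs \<alpha> \<in> Lip0 z"
proof -
  obtain B where "\<And>i. i \<in> I \<Longrightarrow> \<bar>\<alpha> i\<bar> \<le> B" "0 \<le> B"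
    using linf_bounded[OF assms] by blast
  then show ?thesis by (rule beurling_op_Lip0)
qed

lemma beurling_op_finite_support:
  assumes "finite F" "F \<subseteq> I"
  shows "beurling_op I fs (\<lambda>i. if i \<in> F then a i else 0) = (\<lambda>x. \<Sum>i\<in>F. a i * fs i x)"
proof
  fix x
  have "(\<Sum>\<^sub>\<infinity>i\<in>I. (if i \<in> F then a i else 0) * fs i x) = (\<Sum>\<^sub>\<infinity>i\<in>F. a i * fs i x)"
    by (rule infsum_cong_neutral) (use assms(2) in auto)
  then show "beurling_op I fs (\<lambda>i. if i \<in> F then a i else 0) x = (\<Sum>i\<in>F. a i * fs i x)"
    unfolding beurling_op_def using assms(1) by simp
qed

lemma lipnorm_sum_fs_le:
  assumes "finite F" "F \<subseteq> I" "\<And>i. i \<in> F \<Longrightarrow> \<bar>a i\<bar> \<le> 1"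
  shows "(\<lambda>x. \<Sum>i\<in>F. a i * fs i x) \<in> Lip0 z" and "lipnorm (\<lambda>x. \<Sum>i\<in>F. a i * fs i x) \<le> M"
proof -
  have "\<bar>if i \<in> F then a i else 0\<bar> \<le> 1" for i using assms(3) by auto
  from beurling_op_Lip0[of "\<lambda>i. if i \<in> F then a i else 0" 1, OF this]
  show "(\<lambda>x. \<Sum>i\<in>F. a i * fs i x) \<in> Lip0 z" and "lipnorm (\<lambda>x. \<Sum>i\<in>F. a i * fs i x) \<le> M"
    unfolding beurling_op_finite_support[OF assms(1,2)] by simp_all
qed

lemma fs_Lip0: "i \<in> I \<Longrightarrow> fs i \<in> Lip0 z"
  using lipnorm_sum_fs_le(1)[of "{i}" "\<lambda>_. 1"] by simp

lemma sum_beurling_op: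
  assumes "finite S" "\<And>i. i \<in> I \<Longrightarrow> \<bar>\<alpha> i\<bar> \<le> B"
  shows "(\<Sum>x\<in>S. c x * beurling_op I fs \<alpha> x) = (\<Sum>\<^sub>\<infinity>i\<in>I. \<alpha> i * (\<Sum>x\<in>S. c x * fs i x))"
proof -
  have "(\<Sum>x\<in>S. c x * beurling_op I fs \<alpha> x) = (\<Sum>x\<in>S. \<Sum>\<^sub>\<infinity>i\<in>I. c x * (\<alpha> i * fs i x))"
    unfolding beurling_op_def
    by (simp add: infsum_cmult_right[OF summable_on_bounded_mult[OF summable_fs assms(2)]])
  also have "\<dots> = (\<Sum>\<^sub>\<infinity>i\<in>I. \<Sum>x\<in>S. c x * (\<alpha> i * fs i x))"
    using assms(1) summable_on_cmult_right[OF summable_on_bounded_mult[OF summable_fs assms(2)]]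
    by (intro infsum_sum[symmetric])
  finally show ?thesis by (simp add: sum_distrib_left mult.left_commute)
qed

lemma functional_fs_summable:
  assumes lin: "\<And>F a. finite F \<Longrightarrow> F \<subseteq> I \<Longrightarrow>
      \<theta> (\<lambda>x. \<Sum>i\<in>F. a i * fs i x) = (\<Sum>i\<in>F. a i * \<theta> (fs i))"
    and bound: "\<And>f. f \<in> Lip0 z \<Longrightarrow> \<bar>\<theta> f\<bar> \<le> C * lipnorm f" and "0 \<le> C"
  shows "(\<lambda>i. \<theta> (fs i)) summable_on I" and "(\<Sum>\<^sub>\<infinity>i\<in>I. \<bar>\<theta> (fs i)\<bar>) \<le> C * M"
proof -
  have partial_sums: "(\<Sum>i\<in>F. \<bar>\<theta> (fs i)\<bar>) \<le> C * M" if F: "finite F" "F \<subseteq> I" for F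
  proof -
    define a where "a i = sgn (\<theta> (fs i))" for i
    have a_le: "\<And>i. i \<in> F \<Longrightarrow> \<bar>a i\<bar> \<le> 1" by (simp add: a_def abs_sgn_eq)
    have "(\<Sum>i\<in>F. \<bar>\<theta> (fs i)\<bar>) = (\<Sum>i\<in>F. a i * \<theta> (fs i))"
      by (simp add: a_def abs_sgn mult.commute)
    also have "\<dots> = \<theta> (\<lambda>x. \<Sum>i\<in>F. a i * fs i x)"
      by (rule lin[OF F, symmetric])
    also have "\<dots> \<le> C * lipnorm (\<lambda>x. \<Sum>i\<in>F. a i * fs i x)"
      using bound[OF lipnorm_sum_fs_le(1)[where a=a, OF F a_le]] by linarith
    also have "\<dots> \<le> C * M"
      by (rule mult_left_mono[OF lipnorm_sum_fs_le(2)[where a=a, OF F a_le] \<open>0 \<le> C\<close>])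
    finally show ?thesis .
  qed
  have abs_summable: "(\<lambda>i. \<bar>\<theta> (fs i)\<bar>) summable_on I"
    using partial_sums by (intro nonneg_bdd_above_summable_on bdd_aboveI2) auto
  then show "(\<lambda>i. \<theta> (fs i)) summable_on I"
    by (rule summable_on_iff_abs_summable_on_real[THEN iffD2, unfolded real_norm_def])
  show "(\<Sum>\<^sub>\<infinity>i\<in>I. \<bar>\<theta> (fs i)\<bar>) \<le> C * M"
    using abs_summable partial_sums by (rule infsum_le_finite_sums)
qed

lemma free_space_sum_fs:
  assumes "\<phi> \<in> free_space z" "finite F" "F \<subseteq> I"
  shows "\<phi> (\<lambda>x. \<Sum>i\<in>F. a i * fs i x) = (\<Sum>i\<in>F. a i * \<phi> (fs i))"
  using assms fs_Lip0 by (intro free_space_sum) auto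

lemma free_space_fs_summable:
  assumes "\<phi> \<in> free_space z"
  shows "(\<lambda>i. \<phi> (fs i)) summable_on I"
proof -
  obtain C where "0 \<le> C" "\<And>f. f \<in> Lip0 z \<Longrightarrow> \<bar>\<phi> f\<bar> \<le> C * lipnorm f"
    using free_space_bounded[OF assms] by blast
  then show ?thesis
    using free_space_sum_fs[OF assms] by (intro functional_fs_summable(1)) auto
qed

lemma free_space_beurling_op:
  assumes \<phi>: "\<phi> \<in> free_space z" and "\<alpha> \<in> linf I"
  shows "\<phi> (beurling_op I fs \<alpha>) = (\<Sum>\<^sub>\<infinity>i\<in>I. \<alpha> i * \<phi> (fs i))"
proof -
  obtain B where B: "\<And>i. i \<in> I \<Longrightarrow> \<bar>\<alpha> i\<bar> \<le> B" "0 \<le> B"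
    using linf_bounded[OF assms(2)] by blast
  have "\<bar>\<phi> (beurling_op I fs \<alpha>) - (\<Sum>\<^sub>\<infinity>i\<in>I. \<alpha> i * \<phi> (fs i))\<bar> \<le> e * (2 * B * M)"
    if "0 < e" for e
  proof -
    obtain S c where S: "finite S"
      "\<And>f. f \<in> Lip0 z \<Longrightarrow> \<bar>\<phi> f - (\<Sum>x\<in>S. c x * f x)\<bar> \<le> e * lipnorm f"
      using free_spaceE[OF \<phi> \<open>0 < e\<close>] by blast
    define \<theta> where "\<theta> f = \<phi> f - (\<Sum>x\<in>S. c x * f x)" for f
    have \<theta>_sum: "\<theta> (\<lambda>x. \<Sum>i\<in>F. a i * fs i x) = (\<Sum>i\<in>F. a i * \<theta> (fs i))"
      if "finite F" "F \<subseteq> I" for F a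
      using free_space_sum_fs[OF \<phi> that]
      by (simp add: \<theta>_def sum_distrib_left sum.swap[of _ S] mult_ac right_diff_distrib sum_subtractf)
    have "\<bar>\<theta> f\<bar> \<le> e * lipnorm f" if "f \<in> Lip0 z" for f
      using S(2)[OF that] by (simp add: \<theta>_def)
    note \<theta>_fs = functional_fs_summable[OF \<theta>_sum this less_imp_le[OF \<open>0 < e\<close>]]
    have "(\<Sum>\<^sub>\<infinity>i\<in>I. \<alpha> i * \<phi> (fs i)) - (\<Sum>\<^sub>\<infinity>i\<in>I. \<alpha> i * \<theta> (fs i))
        = (\<Sum>\<^sub>\<infinity>i\<in>I. \<alpha> i * \<phi> (fs i) - \<alpha> i * \<theta> (fs i))"
      by (rule infsum_diff[OF summable_on_bounded_mult[OF free_space_fs_summable[OF \<phi>] B(1)]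
            summable_on_bounded_mult[OF \<theta>_fs(1) B(1)], symmetric])
    also have "\<dots> = (\<Sum>\<^sub>\<infinity>i\<in>I. \<alpha> i * (\<Sum>x\<in>S. c x * fs i x))"
      by (simp add: \<theta>_def right_diff_distrib)
    also have "\<dots> = (\<Sum>x\<in>S. c x * beurling_op I fs \<alpha> x)"
      by (rule sum_beurling_op[OF S(1) B(1), symmetric])
    finally have "\<phi> (beurling_op I fs \<alpha>) - (\<Sum>\<^sub>\<infinity>i\<in>I. \<alpha> i * \<phi> (fs i))
        = \<theta> (beurling_op I fs \<alpha>) - (\<Sum>\<^sub>\<infinity>i\<in>I. \<alpha> i * \<theta> (fs i))"
      by (simp add: \<theta>_def)
    also have "\<bar>\<dots>\<bar> \<le> e * lipnorm (beurling_op I fs \<alpha>) + B * (\<Sum>\<^sub>\<infinity>i\<in>I. \<bar>\<theta> (fs i)\<bar>)"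
      by (rule order_trans[OF abs_triangle_ineq4 add_mono[OF _ abs_infsum_bounded_mult_le]])
        (use S(2) beurling_op_Lip0(1)[OF B] \<theta>_fs(1) B(1) in \<open>auto simp: \<theta>_def\<close>)
    also have "\<dots> \<le> e * (B * M) + B * (e * M)"
      using beurling_op_Lip0(2)[OF B] \<theta>_fs(2) \<open>0 < e\<close> B(2)
      by (intro add_mono mult_left_mono) auto
    finally show ?thesis by (simp add: algebra_simps)
  qed
  moreover have "0 \<le> 2 * B * M" using B(2) M_nonneg by simp
  ultimately have "\<phi> (beurling_op I fs \<alpha>) - (\<Sum>\<^sub>\<infinity>i\<in>I. \<alpha> i * \<phi> (fs i)) = 0"
    by (rule eq_0_if_abs_le_mult_eps)
  then show ?thesis by simp
qed

lemma free_space_fs_l1: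
  assumes "\<phi> \<in> free_space z"
  shows "(\<lambda>i. if i \<in> I then \<phi> (fs i) else 0) \<in> l1 I"
proof -
  have "(\<lambda>i. \<bar>\<phi> (fs i)\<bar>) summable_on I"
    using summable_on_iff_abs_summable_on_real[THEN iffD1, OF free_space_fs_summable[OF assms]]
    by simp
  then have "(\<lambda>i. \<bar>if i \<in> I then \<phi> (fs i) else 0\<bar>) summable_on I"
    by (rule summable_on_cong[THEN iffD1, rotated]) simp
  then show ?thesis by (simp add: l1_def)
qed

end

theorem theorem3p11:
  fixes z :: "'a::metric_space" and I :: "'i set"
    and xs ys :: "'i \<Rightarrow> 'a" and fs :: "'i \<Rightarrow> 'a \<Rightarrow> real"
  assumes "lip_interpolating z I xs ys"
    and "beurling_set z I xs ys (lip_interp_const z I xs ys) fs"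
  shows "continuous_map (weakstar_linf I) (weakstar_Lip0 z) (beurling_op I fs)"
proof -
  interpret beurling_family z I fs "max (lip_interp_const z I xs ys) 0"
    using assms(2) by (rule beurling_set_imp_beurling_family)
  show ?thesis
  proof (rule continuous_map_weakstar_Lip0I)
    show "beurling_op I fs \<in> topspace (weakstar_linf I) \<rightarrow> Lip0 z"
      by (auto simp: topspace_weakstar_linf intro: beurling_op_linf_Lip0)
  next
    fix \<phi> assume \<phi>: "\<phi> \<in> free_space z"
    from continuous_map_weakstar_linf_pairing[OF free_space_fs_l1[OF \<phi>]]
    show "continuous_map (weakstar_linf I) euclidean (\<lambda>\<alpha>. \<phi> (beurling_op I fs \<alpha>))"
      by (rule continuous_map_eq)
        (auto simp: topspace_weakstar_linf free_space_beurling_op[OF \<phi>] intro!: infsum_cong)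
  qed
qed

end
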